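(* Under the standing setting and assumptions (A1)–(A3) described in the context, the following are equivalent: (a) $\mathcal R(X)\neq\emptyset$ for every $X\in\mathcal X$; (b) $\mathcal R(X)\neq\emptyset$ for every $X\in\partial(\mathcal A+\ker(\pi))$; (c) $\mathcal A+\ker(\pi)$ is closed.
   Context: Let $\mathcal X$ be a Hausdorff, first countable, locally convex topological vector space over $\mathbb R$, partially ordered by a partial order $\geq$ with positive cone $\mathcal X_+=\{X\in\mathcal X: X\geq 0\}$. Let $\mathcal M\subset\mathcal X$ be a vector subspace with $1<\dim\mathcal M<\infty$, carrying the relative topology, and let $\pi:\mathcal M\to\mathbb R$ be linear with $\ker(\pi)=\{Z\in\mathcal M:\pi(Z)=0\}$. Standing assumptions: (A1) there is $U\in\mathcal M\cap\mathcal X_+$ with $\pi(U)=1$; (A2) $\mathcal A\subsetneq\mathcal X$ is closed, contains $0$, and satisfies $\mathcal A+\mathcal X_+\subset\mathcal A$; (A3) the map $\rho(X)=\inf\{\pi(Z): Z\in\mathcal M,\ X+Z\in\mathcal A\}$ is finitely valued and continuous on $\mathcal X$. The optimal payoff map is $\mathcal R(X)=\{Z\in\mathcal M: X+Z\in\mathcal A,\ \pi(Z)=\rho(X)\}$. $\partial$ denotes boundary in $\mathcal X$. *)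

theory Defs
  imports "HOL-Analysis.Analysis"
begin

text \<open>Hausdorffness and first countability are imposed via the type classes
  t2_space and first_countable_topology.\<close>
definition tvs_ops_continuous :: "'a::{real_vector,topological_space} itself \<Rightarrow> bool" where
  "tvs_ops_continuous _ \<longleftrightarrow>
     continuous_on (UNIV :: ('a \<times> 'a) set) (\<lambda>p. fst p + snd p) \<and>
     continuous_on (UNIV :: (real \<times> 'a) set) (\<lambda>p. fst p *\<^sub>R snd p)"

definition locally_convex :: "'a::{real_vector,topological_space} itself \<Rightarrow> bool" where
  "locally_convex _ \<longleftrightarrow>
     (\<forall>(x::'a) U. open U \<and> x \<in> U \<longrightarrow> (\<exists>V. open V \<and> convex V \<and> x \<in> V \<and> V \<subseteq> U))"

definition vector_order :: "('a::real_vector \<Rightarrow> 'a \<Rightarrow> bool) \<Rightarrow> bool" where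
  "vector_order ge \<longleftrightarrow>
     (\<forall>x. ge x x) \<and> (\<forall>x y. ge x y \<and> ge y x \<longrightarrow> x = y) \<and>
     (\<forall>x y z. ge x y \<and> ge y z \<longrightarrow> ge x z) \<and>
     (\<forall>x y z. ge x y \<longrightarrow> ge (x + z) (y + z)) \<and>
     (\<forall>x y (c::real). ge x y \<and> c \<ge> 0 \<longrightarrow> ge (c *\<^sub>R x) (c *\<^sub>R y))"

definition pos_cone :: "('a::real_vector \<Rightarrow> 'a \<Rightarrow> bool) \<Rightarrow> 'a set" where
  "pos_cone ge = {X. ge X 0}"

definition linear_on :: "'a::real_vector set \<Rightarrow> ('a \<Rightarrow> real) \<Rightarrow> bool" where
  "linear_on M \<pi> \<longleftrightarrow>
     (\<forall>x\<in>M. \<forall>y\<in>M. \<pi> (x + y) = \<pi> x + \<pi> y) \<and> (\<forall>x\<in>M. \<forall>c. \<pi> (c *\<^sub>R x) = c * \<pi> x)"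

definition kernel_on :: "'a::real_vector set \<Rightarrow> ('a \<Rightarrow> real) \<Rightarrow> 'a set" where
  "kernel_on M \<pi> = {Z \<in> M. \<pi> Z = 0}"

definition cost_set :: "'a::real_vector set \<Rightarrow> ('a \<Rightarrow> real) \<Rightarrow> 'a set \<Rightarrow> 'a \<Rightarrow> real set" where
  "cost_set M \<pi> A X = {\<pi> Z | Z. Z \<in> M \<and> X + Z \<in> A}"

definition rho :: "'a::real_vector set \<Rightarrow> ('a \<Rightarrow> real) \<Rightarrow> 'a set \<Rightarrow> 'a \<Rightarrow> real" where
  "rho M \<pi> A X = Inf (cost_set M \<pi> A X)"

text \<open>Finitely valued: the infimum is over a nonempty set bounded below.\<close>
definition rho_finite :: "'a::real_vector set \<Rightarrow> ('a \<Rightarrow> real) \<Rightarrow> 'a set \<Rightarrow> bool" where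
  "rho_finite M \<pi> A \<longleftrightarrow> (\<forall>X. cost_set M \<pi> A X \<noteq> {} \<and> bdd_below (cost_set M \<pi> A X))"

definition optimal_payoffs :: "'a::real_vector set \<Rightarrow> ('a \<Rightarrow> real) \<Rightarrow> 'a set \<Rightarrow> 'a \<Rightarrow> 'a set" where
  "optimal_payoffs M \<pi> A X = {Z \<in> M. X + Z \<in> A \<and> \<pi> Z = rho M \<pi> A X}"

end

theory Submission
  imports Defs
begin

text \<open>Fix a payoff \<open>U \<in> M\<close> with \<open>\<pi> U = 1\<close>. Then \<open>c\<close> is the cost of an admissible payoff for
  \<open>X\<close> exactly when \<open>X + c U \<in> A + ker \<pi>\<close>, so the cost set of \<open>X\<close> is the preimage of
  \<open>A + ker \<pi>\<close> under the line \<open>t \<mapsto> X + t U\<close>. If \<open>A + ker \<pi>\<close> is closed, every cost set is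
  closed and contains its infimum \<open>\<rho>(X)\<close>. Conversely, \<open>\<rho> \<le> 0\<close> on \<open>A + ker \<pi>\<close>, hence by
  continuity on its closure; a closure point \<open>X\<close> outside \<open>A + ker \<pi>\<close> lies on the boundary, so
  \<open>X + \<rho>(X) U \<in> A + ker \<pi>\<close>, and moving up by \<open>-\<rho>(X) U \<ge> 0\<close> puts \<open>X\<close> itself in
  \<open>A + ker \<pi>\<close>.\<close>

definition kernel_sum :: "'a::real_vector set \<Rightarrow> ('a \<Rightarrow> real) \<Rightarrow> 'a set \<Rightarrow> 'a set" where
  "kernel_sum M \<pi> A = {a + z | a z. a \<in> A \<and> z \<in> kernel_on M \<pi>}"

lemma linear_on_diff:
  assumes "subspace M" "linear_on M \<pi>" "x \<in> M" "y \<in> M"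
  shows "\<pi> (x - y) = \<pi> x - \<pi> y"
proof -
  have "\<pi> (- y) = - \<pi> y"
    using assms(2,4) unfolding linear_on_def by (metis mult_minus1 scaleR_minus1_left)
  moreover have "\<pi> (x + - y) = \<pi> x + \<pi> (- y)"
    using assms subspace_neg[of M y] unfolding linear_on_def by blast
  ultimately show ?thesis
    by simp
qed

lemma cost_set_iff_kernel_sum:
  assumes M: "subspace M" and \<pi>: "linear_on M \<pi>" and U: "U \<in> M" "\<pi> U = 1"
  shows "c \<in> cost_set M \<pi> A X \<longleftrightarrow> X + c *\<^sub>R U \<in> kernel_sum M \<pi> A"
proof -
  have cU: "c *\<^sub>R U \<in> M" "\<pi> (c *\<^sub>R U) = c"
    using M \<pi> U by (simp_all add: subspace_scale linear_on_def)
  show ?thesis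
  proof
    assume "c \<in> cost_set M \<pi> A X"
    then obtain Z where Z: "Z \<in> M" "\<pi> Z = c" "X + Z \<in> A"
      by (auto simp: cost_set_def)
    have "c *\<^sub>R U - Z \<in> kernel_on M \<pi>"
      using linear_on_diff[OF M \<pi> cU(1) Z(1)] M cU Z by (simp add: kernel_on_def subspace_diff)
    moreover have "X + c *\<^sub>R U = (X + Z) + (c *\<^sub>R U - Z)"
      by simp
    ultimately show "X + c *\<^sub>R U \<in> kernel_sum M \<pi> A"
      using Z(3) unfolding kernel_sum_def by blast
  next
    assume "X + c *\<^sub>R U \<in> kernel_sum M \<pi> A"
    then obtain a z where az: "a \<in> A" "z \<in> M" "\<pi> z = 0" "X + c *\<^sub>R U = a + z"
      by (auto simp: kernel_sum_def kernel_on_def)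
    have "c *\<^sub>R U - z \<in> M" "\<pi> (c *\<^sub>R U - z) = c"
      using linear_on_diff[OF M \<pi> cU(1) az(2)] M cU az by (simp_all add: subspace_diff)
    moreover have "X + (c *\<^sub>R U - z) = a"
      using az(4) by (simp add: algebra_simps)
    ultimately show "c \<in> cost_set M \<pi> A X"
      using az(1) unfolding cost_set_def by force
  qed
qed

lemma kernel_sum_add_pos_cone:
  assumes "\<forall>a\<in>A. \<forall>p\<in>pos_cone ge. a + p \<in> A" "Y \<in> kernel_sum M \<pi> A" "p \<in> pos_cone ge"
  shows "Y + p \<in> kernel_sum M \<pi> A"
proof -
  obtain a z where "a \<in> A" "z \<in> kernel_on M \<pi>" "Y = a + z"
    using assms(2) by (auto simp: kernel_sum_def)
  moreover from this assms(1,3) have "a + p \<in> A"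
    by blast
  moreover from calculation have "Y + p = (a + p) + z"
    by (simp add: algebra_simps)
  ultimately show ?thesis
    unfolding kernel_sum_def by blast
qed

lemma pos_cone_scaleR:
  assumes "vector_order ge" "U \<in> pos_cone ge" "0 \<le> t"
  shows "t *\<^sub>R U \<in> pos_cone ge"
proof -
  have "ge (t *\<^sub>R U) (t *\<^sub>R 0)"
    using assms unfolding vector_order_def pos_cone_def by blast
  then show ?thesis
    by (simp add: pos_cone_def)
qed

lemma optimal_payoffs_nonempty_iff:
  "optimal_payoffs M \<pi> A X \<noteq> {} \<longleftrightarrow> rho M \<pi> A X \<in> cost_set M \<pi> A X"
  unfolding optimal_payoffs_def cost_set_def by (auto, metis)

lemma continuous_on_line:
  fixes X U :: "'a::{real_vector,topological_space}"
  assumes "tvs_ops_continuous TYPE('a)"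
  shows "continuous_on UNIV (\<lambda>t::real. X + t *\<^sub>R U)"
proof -
  have add: "continuous_on UNIV (\<lambda>p::'a \<times> 'a. fst p + snd p)"
    and scale: "continuous_on UNIV (\<lambda>p::real \<times> 'a. fst p *\<^sub>R snd p)"
    using assms by (auto simp: tvs_ops_continuous_def)
  have "continuous_on UNIV (\<lambda>t::real. t *\<^sub>R U)"
    using continuous_on_compose2[OF scale continuous_on_Pair[OF continuous_on_id continuous_on_const]]
    by simp
  then show ?thesis
    using continuous_on_compose2[OF add continuous_on_Pair[OF continuous_on_const]] by simp
qed

lemma optimal_payoffs_nonempty_if_closed:
  assumes tvs: "tvs_ops_continuous TYPE('a::{real_vector,topological_space})"
    and M: "subspace M" and \<pi>: "linear_on M \<pi>" and U: "U \<in> M" "\<pi> U = 1"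
    and fin: "rho_finite M \<pi> A"
    and closed: "closed (kernel_sum M \<pi> A)"
  shows "optimal_payoffs M \<pi> A (X::'a) \<noteq> {}"
proof -
  have "cost_set M \<pi> A X = (\<lambda>t. X + t *\<^sub>R U) -` kernel_sum M \<pi> A"
    using cost_set_iff_kernel_sum[OF M \<pi> U] by auto
  then have "closed (cost_set M \<pi> A X)"
    using closed_vimage[OF closed continuous_on_line[OF tvs]] by simp
  moreover have "cost_set M \<pi> A X \<noteq> {}" "bdd_below (cost_set M \<pi> A X)"
    using fin by (auto simp: rho_finite_def)
  ultimately have "rho M \<pi> A X \<in> cost_set M \<pi> A X"
    unfolding rho_def by (blast intro: closed_contains_Inf)
  then show ?thesis
    by (simp add: optimal_payoffs_nonempty_iff)
qed

lemma rho_nonpos_on_closure_kernel_sum: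
  assumes M: "subspace M" and \<pi>: "linear_on M \<pi>" and U: "U \<in> M" "\<pi> U = 1"
    and fin: "rho_finite M \<pi> A" and cont: "continuous_on UNIV (rho M \<pi> A)"
    and X: "X \<in> closure (kernel_sum M \<pi> A)"
  shows "rho M \<pi> A X \<le> 0"
proof -
  have "kernel_sum M \<pi> A \<subseteq> rho M \<pi> A -` {..0}"
  proof
    fix Y assume "Y \<in> kernel_sum M \<pi> A"
    then have "0 \<in> cost_set M \<pi> A Y"
      using cost_set_iff_kernel_sum[OF M \<pi> U, of 0] by simp
    then show "Y \<in> rho M \<pi> A -` {..0}"
      using fin unfolding rho_def rho_finite_def by (simp add: cInf_lower)
  qed
  moreover have "closed (rho M \<pi> A -` {..0})"
    using closed_vimage[OF _ cont] by simp
  ultimately have "closure (kernel_sum M \<pi> A) \<subseteq> rho M \<pi> A -` {..0}"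
    by (rule closure_minimal)
  with X show ?thesis
    by auto
qed

lemma closed_kernel_sum_if_frontier_optimal:
  assumes ord: "vector_order ge"
    and M: "subspace M" and \<pi>: "linear_on M \<pi>"
    and U: "U \<in> M" "U \<in> pos_cone ge" "\<pi> U = 1"
    and mono: "\<forall>a\<in>A. \<forall>p\<in>pos_cone ge. a + p \<in> A"
    and fin: "rho_finite M \<pi> A" and cont: "continuous_on UNIV (rho M \<pi> A)"
    and opt: "\<forall>X\<in>frontier (kernel_sum M \<pi> A). optimal_payoffs M \<pi> A X \<noteq> {}"
  shows "closed (kernel_sum M \<pi> A)"
proof -
  let ?S = "kernel_sum M \<pi> A"
  have "X \<in> ?S" if X: "X \<in> closure ?S" for X
  proof (rule ccontr)
    assume "X \<notin> ?S"
    then have "X \<in> frontier ?S"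
      using X interior_subset unfolding frontier_def by blast
    then have "X + rho M \<pi> A X *\<^sub>R U \<in> ?S"
      using opt cost_set_iff_kernel_sum[OF M \<pi> U(1,3)]
      by (simp add: optimal_payoffs_nonempty_iff)
    moreover have "(- rho M \<pi> A X) *\<^sub>R U \<in> pos_cone ge"
      using rho_nonpos_on_closure_kernel_sum[OF M \<pi> U(1,3) fin cont X]
      by (intro pos_cone_scaleR[OF ord U(2)]) simp
    ultimately have "X + rho M \<pi> A X *\<^sub>R U + (- rho M \<pi> A X) *\<^sub>R U \<in> ?S"
      by (rule kernel_sum_add_pos_cone[OF mono])
    with \<open>X \<notin> ?S\<close> show False
      by (simp add: scaleR_left.minus)
  qed
  then show ?thesis
    using closure_subset_eq by blast
qed

theorem mainTheorem7:
  fixes ge :: "'a::{real_vector, t2_space, first_countable_topology} \<Rightarrow> 'a \<Rightarrow> bool"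
    and M :: "'a set" and \<pi> :: "'a \<Rightarrow> real" and A :: "'a set"
  assumes tvs: "tvs_ops_continuous TYPE('a)"
    and lc: "locally_convex TYPE('a)"
    and ord: "vector_order ge"
    and M_sub: "subspace M"
    and M_fin: "\<exists>B. finite B \<and> span B = M"
    and M_dim: "1 < dim M"
    and \<pi>_lin: "linear_on M \<pi>"
    and A1: "\<exists>U\<in>M. U \<in> pos_cone ge \<and> \<pi> U = 1"
    and A2_closed: "closed A" and A2_zero: "0 \<in> A" and A2_proper: "A \<noteq> UNIV"
    and A2_mono: "\<forall>a\<in>A. \<forall>p\<in>pos_cone ge. a + p \<in> A"
    and A3_fin: "rho_finite M \<pi> A"
    and A3_cont: "continuous_on UNIV (rho M \<pi> A)"
  shows "((\<forall>X. optimal_payoffs M \<pi> A X \<noteq> {}) \<longleftrightarrow>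
           (\<forall>X\<in>frontier {a + z | a z. a \<in> A \<and> z \<in> kernel_on M \<pi>}. optimal_payoffs M \<pi> A X \<noteq> {}))
       \<and> ((\<forall>X\<in>frontier {a + z | a z. a \<in> A \<and> z \<in> kernel_on M \<pi>}. optimal_payoffs M \<pi> A X \<noteq> {}) \<longleftrightarrow>
           closed {a + z | a z. a \<in> A \<and> z \<in> kernel_on M \<pi>})"
proof -
  obtain U where U: "U \<in> M" "U \<in> pos_cone ge" "\<pi> U = 1"
    using A1 by blast
  have c_a: "closed (kernel_sum M \<pi> A) \<Longrightarrow> optimal_payoffs M \<pi> A X \<noteq> {}" for X
    using optimal_payoffs_nonempty_if_closed[OF tvs M_sub \<pi>_lin U(1,3) A3_fin] .
  have b_c: "(\<forall>X\<in>frontier (kernel_sum M \<pi> A). optimal_payoffs M \<pi> A X \<noteq> {})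
      \<Longrightarrow> closed (kernel_sum M \<pi> A)"
    using closed_kernel_sum_if_frontier_optimal[OF ord M_sub \<pi>_lin U A2_mono A3_fin A3_cont] .
  have S: "{a + z | a z. a \<in> A \<and> z \<in> kernel_on M \<pi>} = kernel_sum M \<pi> A"
    unfolding kernel_sum_def ..
  have a_b: "(\<forall>X. optimal_payoffs M \<pi> A X \<noteq> {})
      \<Longrightarrow> (\<forall>X\<in>frontier (kernel_sum M \<pi> A). optimal_payoffs M \<pi> A X \<noteq> {})"
    by simp
  show ?thesis
    unfolding S using a_b b_c c_a by (intro conjI iffI) blast+
qed

end
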